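(* Let $d\geq 3$ and let $P$ be the standard pattern of $Q_d$. Then any ordering of the vertices of $P$ as a sequence $(v_1,\ldots,v_m)$ is an $L$-sequence, i.e., for each $i$ there is $u_i\in N[v_i]$ with $u_i\notin N(v_j)$ for all $j<i$.
   Context: $Q_d$ is the $d$-dimensional hypercube: vertices are the $0$-$1$ strings of length $d$, two strings adjacent iff they differ in exactly one position. $N(v)$ is the open neighborhood, $N[v]=N(v)\cup\{v\}$. Partition $Q_d$ into $2^{d-3}$ subcubes, each consisting of the 8 strings sharing a fixed prefix $*\in\{0,1\}^{d-3}$ in the first $d-3$ positions. Pattern A of a subcube with prefix $*$ is $\{*000,*011,*101,*110\}$ and Pattern B is $\{*001,*010,*100,*111\}$. The cube distance between two subcubes is the Hamming distance between their prefixes. Let $Q_1$ denote the subcube with prefix $0^{d-3}$. The standard pattern is the set consisting of the Pattern A vertices of all subcubes at even cube distance from $Q_1$ together with the Pattern B vertices of all subcubes at odd cube distance from $Q_1$. *)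

theory Defs
  imports Main
begin

text \<open>Vertices of Q_d: 0-1 strings of length d, as bool lists (True = 1).\<close>
definition hypercube :: "nat \<Rightarrow> bool list set" where
  "hypercube d = {xs. length xs = d}"

definition hamming :: "bool list \<Rightarrow> bool list \<Rightarrow> nat" where
  "hamming xs ys = card {i. i < length xs \<and> xs ! i \<noteq> ys ! i}"

definition cube_adj :: "bool list \<Rightarrow> bool list \<Rightarrow> bool" where
  "cube_adj xs ys \<longleftrightarrow> length xs = length ys \<and> hamming xs ys = 1"

definition open_nbhd :: "nat \<Rightarrow> bool list \<Rightarrow> bool list set" where
  "open_nbhd d v = {u \<in> hypercube d. cube_adj v u}"

definition closed_nbhd :: "nat \<Rightarrow> bool list \<Rightarrow> bool list set" where
  "closed_nbhd d v = insert v (open_nbhd d v)"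

definition patternA :: "bool list \<Rightarrow> bool list set" where
  "patternA p = (\<lambda>s. p @ s) ` {[False,False,False],[False,True,True],[True,False,True],[True,True,False]}"

definition patternB :: "bool list \<Rightarrow> bool list set" where
  "patternB p = (\<lambda>s. p @ s) ` {[False,False,True],[False,True,False],[True,False,False],[True,True,True]}"

text \<open>Cube distance between subcubes = Hamming distance of prefixes; Q_1 has prefix 0^(d-3).\<close>
definition standard_pattern :: "nat \<Rightarrow> bool list set" where
  "standard_pattern d =
     (\<Union>p \<in> {p. length p = d - 3}.
        if even (hamming p (replicate (d - 3) False)) then patternA p else patternB p)"

definition L_sequence :: "nat \<Rightarrow> bool list list \<Rightarrow> bool" where
  "L_sequence d vs \<longleftrightarrow>
     (\<forall>i < length vs. \<exists>u \<in> closed_nbhd d (vs ! i). \<forall>j < i. u \<notin> open_nbhd d (vs ! j))"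

end

theory Submission
  imports Defs
begin

text \<open>Every vertex of the standard pattern has even weight: the three last coordinates of a
Pattern A vertex have even weight and sit behind a prefix of even weight, those of a Pattern B
vertex have odd weight behind a prefix of odd weight. Adjacent vertices of the cube have weights
of different parity, so the standard pattern is an independent set, and in any ordering of it
one may take \<open>u\<^sub>i = v\<^sub>i\<close>.\<close>

lemma hamming_Nil [simp]: "hamming [] ys = 0"
  by (simp add: hamming_def)

lemma hamming_Cons [simp]:
  "hamming (x # xs) (y # ys) = (if x = y then 0 else 1) + hamming xs ys"
proof -
  let ?D = "{i. i < length xs \<and> xs ! i \<noteq> ys ! i}"
  have "{i. i < length (x # xs) \<and> (x # xs) ! i \<noteq> (y # ys) ! i}
      = (if x = y then {} else {0}) \<union> Suc ` ?D"
    by (auto simp: image_iff less_Suc_eq_0_disj)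
  moreover have "card ((if x = y then {} else {0}) \<union> Suc ` ?D) = (if x = y then 0 else 1) + card ?D"
    by (subst card_Un_disjoint) (auto simp: card_image)
  ultimately show ?thesis
    unfolding hamming_def by simp
qed

lemma even_hamming_iff:
  "length xs = length ys \<Longrightarrow>
    even (hamming xs ys) \<longleftrightarrow> even (count_list xs True + count_list ys True)"
  by (induction xs ys rule: list_induct2) (auto split: if_splits)

lemma hamming_replicate_False: "hamming p (replicate (length p) False) = count_list p True"
  by (induction p) auto

lemma not_cube_adj_if_even_weights:
  assumes "even (count_list v True)" and "even (count_list w True)"
  shows "\<not> cube_adj v w"
  using assms even_hamming_iff[of v w] by (auto simp: cube_adj_def)

lemma even_weight_if_in_standard_pattern:
  assumes "v \<in> standard_pattern d"
  shows "even (count_list v True)"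
proof -
  obtain p where "length p = d - 3"
    and "v \<in> (if even (hamming p (replicate (d - 3) False)) then patternA p else patternB p)"
    using assms by (auto simp: standard_pattern_def)
  then have "v \<in> (if even (count_list p True) then patternA p else patternB p)"
    by (metis hamming_replicate_False)
  then show ?thesis
    by (cases "even (count_list p True)") (auto simp: patternA_def patternB_def)
qed

lemma L_sequence_if_independent:
  assumes "\<And>v w. v \<in> set vs \<Longrightarrow> w \<in> set vs \<Longrightarrow> \<not> cube_adj v w"
  shows "L_sequence d vs"
  unfolding L_sequence_def
proof (intro allI impI)
  fix i assume "i < length vs"
  then have "\<forall>j < i. vs ! i \<notin> open_nbhd d (vs ! j)"
    using assms by (auto simp: open_nbhd_def)
  then show "\<exists>u \<in> closed_nbhd d (vs ! i). \<forall>j < i. u \<notin> open_nbhd d (vs ! j)"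
    by (auto simp: closed_nbhd_def)
qed

theorem mainTheorem8:
  fixes d :: nat and vs :: "bool list list"
  assumes "d \<ge> 3"
    and "distinct vs"
    and "set vs = standard_pattern d"
  shows "L_sequence d vs"
proof (rule L_sequence_if_independent)
  fix v w assume "v \<in> set vs" "w \<in> set vs"
  with assms(3) show "\<not> cube_adj v w"
    by (simp add: even_weight_if_in_standard_pattern not_cube_adj_if_even_weights)
qed

end
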